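(* Let $\mathbf{x}$ be a mean zero random vector in $\mathbb{R}^k$ with law $P$ that is subgaussian with parameter $\sigma$, let $S=\mathbb{E}[\mathbf{x}\mathbf{x}^T]$, and let $\mathbf{x}^{(1)},\dots,\mathbf{x}^{(n)}$ be i.i.d. copies of $\mathbf{x}$ with empirical distribution $\hat P$ and $\hat S = \frac1n\sum_{r=1}^n\mathbf{x}^{(r)}(\mathbf{x}^{(r)})^T$. For $F\in\mathbb{R}^{k\times k}$ and $\mathbf{t}\in\mathbb{R}^k$ define $$\Delta(\mathbf{t},F\mid P) := \Big|\mathbb{E}\big[e^{i\mathbf{t}^TF\mathbf{x}}\big]e^{-\mathbf{t}^T\mathrm{diag}(FSF^T)\mathbf{t}} - \prod_{j=1}^k\mathbb{E}\big[e^{it_j(F\mathbf{x})_j}\big]e^{-\mathbf{t}^TFSF^T\mathbf{t}}\Big|,$$ $$\Delta(\mathbf{t},F\mid \hat P) := \Big|\frac1n\sum_{r=1}^n e^{i\mathbf{t}^TF\mathbf{x}^{(r)}}\,e^{-\mathbf{t}^T\mathrm{diag}(F\hat SF^T)\mathbf{t}} - \prod_{j=1}^k\Big(\frac1n\sum_{r=1}^n e^{it_j(F\mathbf{x}^{(r)})_j}\Big)e^{-\mathbf{t}^TF\hat SF^T\mathbf{t}}\Big|.$$ Let $\mathcal{F}:=\{F\in\mathbb{R}^{k\times k}:\|F\|\le1\}$ and $C_{\mathbf{t}} := \max(1,\|\mathbf{t}\|^2\mathrm{Tr}(S))$. Then for fixed $\mathbf{t}\in\mathbb{R}^k$, $$\sup_{F\in\mathcal{F}}\big|\Delta(\mathbf{t},F\mid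 P)-\Delta(\mathbf{t},F\mid\hat P)\big| = O_P\left(\|\mathbf{t}\|\sqrt{\frac{k\|S\|\max(k,\sigma^4\|S\|)\log(nC_{\mathbf{t}})}{n}}\right).$$
   Context: $\|\cdot\|$ is the Euclidean norm for vectors and the operator norm for matrices; $\mathrm{diag}(M)$ is the diagonal matrix with the diagonal of $M$. "Subgaussian with parameter $\sigma$" refers to the subgaussian Orlicz ($\psi_2$) norm bound $\sigma$. $X_n=O_P(a_n)$ means $X_n/a_n$ is stochastically bounded: for every $\epsilon>0$ there is a finite $M$ with $\sup_n\mathbb{P}(|X_n/a_n|>M)\le\epsilon$. *)

theory Defs
  imports "HOL-Probability.Probability"
begin

text \<open>Subgaussian with parameter sigma: the (vector) Orlicz psi_2 norm
  sup over unit u of the psi_2 norm of u.x, with psi_2 norm of Y being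
  inf of s > 0 with E exp(Y^2/s^2) \<le> 2, is at most sigma.\<close>
definition subgaussian :: "(real^'k) measure \<Rightarrow> real \<Rightarrow> bool" where
  "subgaussian P \<sigma> \<longleftrightarrow> \<sigma> \<ge> 0 \<and>
     (\<forall>u::real^'k. norm u = 1 \<longrightarrow> (\<forall>s. s > \<sigma> \<and> s > 0 \<longrightarrow>
        integrable P (\<lambda>x. exp ((u \<bullet> x / s)^2)) \<and>
        (\<integral>x. exp ((u \<bullet> x / s)^2) \<partial>P) \<le> 2))"

definition sec_mom :: "(real^'k) measure \<Rightarrow> real^'k^'k" where
  "sec_mom P = (\<chi> i j. \<integral>x. x$i * x$j \<partial>P)"

definition emp_sec_mom :: "(nat \<Rightarrow> real^'k) \<Rightarrow> nat \<Rightarrow> real^'k^'k" where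
  "emp_sec_mom xs n = (\<chi> i j. (1 / real n) * (\<Sum>r<n. xs r $ i * xs r $ j))"

definition qform :: "real^'k^'k \<Rightarrow> real^'k \<Rightarrow> real" where
  "qform A t = t \<bullet> (A *v t)"

definition qdiag :: "real^'k^'k \<Rightarrow> real^'k \<Rightarrow> real" where
  "qdiag A t = (\<Sum>j\<in>UNIV. A$j$j * (t$j)^2)"

definition Delta_pop :: "(real^'k) measure \<Rightarrow> real^'k \<Rightarrow> real^'k^'k \<Rightarrow> real" where
  "Delta_pop P t F =
    (let S = sec_mom P; G = F ** S ** transpose F in
     cmod ((\<integral>x. cis (t \<bullet> (F *v x)) \<partial>P) * complex_of_real (exp (- qdiag G t))
         - (\<Prod>j\<in>UNIV. \<integral>x. cis (t$j * (F *v x)$j) \<partial>P) * complex_of_real (exp (- qform G t))))"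

definition Delta_emp :: "(nat \<Rightarrow> real^'k) \<Rightarrow> nat \<Rightarrow> real^'k \<Rightarrow> real^'k^'k \<Rightarrow> real" where
  "Delta_emp xs n t F =
    (let S = emp_sec_mom xs n; G = F ** S ** transpose F in
     cmod ((1 / of_nat n) * (\<Sum>r<n. cis (t \<bullet> (F *v xs r))) * complex_of_real (exp (- qdiag G t))
         - (\<Prod>j\<in>UNIV. (1 / of_nat n) * (\<Sum>r<n. cis (t$j * (F *v xs r)$j)))
             * complex_of_real (exp (- qform G t))))"

definition rateA3 :: "(real^'k) measure \<Rightarrow> real \<Rightarrow> real^'k \<Rightarrow> nat \<Rightarrow> real" where
  "rateA3 P \<sigma> t n =
    (let S = sec_mom P; k = real CARD('k); nS = onorm (\<lambda>v. S *v v);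
         Ct = max 1 ((norm t)^2 * trace S) in
     norm t * sqrt (k * nS * max k (\<sigma>^4 * nS) * ln (real n * Ct) / real n))"

end

theory Submission
  imports Defs
begin

text \<open>Write phi and phi' for the characteristic functions of x and of the sample, S' for the
  sample second moment matrix. Both Delta's have the form |a exp(-A) - b exp(-B)|, which is
  1-Lipschitz in each of a, A, b, B as long as |a'|, |b'| <= 1 and A, B >= 0. Here a is phi at
  F^T t, b is the product of phi at the scaled rows t_j F_j, B is the quadratic form of S at F^T t
  and A the sum of those at the t_j F_j; all these vectors have norm at most |t| when |F| <= 1.
  Hence, uniformly in F,
  |Delta(t,F|P) - Delta(t,F|P')| <= (k+1) (sup_{|u| <= |t|} |phi u - phi' u| + |t|^2 sum_ij |S_ij - S'_ij|).
  The supremum is controlled by Hoeffding's inequality on a grid of mesh n^(-1/2) in the ball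
  together with the Lipschitz continuity of phi and phi' (with constants E|x| and the sample
  mean of |x^(r)|, the latter bounded by Markov's inequality), and the entries of S' by
  Chebyshev's inequality, using the fourth moments that subgaussianity provides. On an event
  of probability at least 1 - eps this gives the bound alpha sqrt((k log n + beta)/n) + gamma/sqrt n,
  which is dominated by the stated rate since log(n C_t) >= log n.\<close>

section \<open>A deterministic perturbation bound for \<open>Delta\<close>\<close>

lemma abs_exp_minus_diff_le:
  fixes A B :: real
  assumes "0 \<le> A" "0 \<le> B"
  shows "\<bar>exp (- A) - exp (- B)\<bar> \<le> \<bar>A - B\<bar>"
proof -
  have *: "exp (- a) - exp (- b) \<le> b - a" if "0 \<le> a" "a \<le> b" for a b :: real
  proof -
    have "exp (- a) - exp (- b) = exp (- a) * (1 - exp (- (b - a)))"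
      by (simp add: algebra_simps flip: exp_add)
    also have "\<dots> \<le> 1 * (1 - exp (- (b - a)))"
      using that by (intro mult_right_mono) auto
    also have "\<dots> \<le> b - a"
      by (smt (verit) exp_ge_add_one_self[of "a - b"])
    finally show ?thesis .
  qed
  show ?thesis
    using *[of A B] *[of B A] assms by (cases "A \<le> B") auto
qed

lemma norm_mult_exp_minus_diff_le:
  fixes x x' :: complex and C C' :: real
  assumes "norm x' \<le> 1" "0 \<le> C" "0 \<le> C'"
  shows "cmod (x * of_real (exp (- C)) - x' * of_real (exp (- C'))) \<le> cmod (x - x') + \<bar>C - C'\<bar>"
proof -
  have "x * of_real (exp (- C)) - x' * of_real (exp (- C'))
      = (x - x') * of_real (exp (- C)) + x' * of_real (exp (- C) - exp (- C'))"
    by (simp add: algebra_simps)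
  also have "cmod \<dots> \<le> cmod (x - x') * exp (- C) + cmod x' * \<bar>exp (- C) - exp (- C')\<bar>"
    by (metis (no_types, lifting) norm_mult norm_of_real norm_triangle_ineq abs_exp_cancel of_real_diff)
  also have "\<dots> \<le> cmod (x - x') * 1 + 1 * \<bar>C - C'\<bar>"
    using assms abs_exp_minus_diff_le[of C C'] by (intro add_mono mult_mono) auto
  finally show ?thesis by simp
qed

definition weighted_gap :: "complex \<Rightarrow> real \<Rightarrow> complex \<Rightarrow> real \<Rightarrow> real" where
  "weighted_gap a A b B = cmod (a * of_real (exp (- A)) - b * of_real (exp (- B)))"

lemma weighted_gap_diff_le:
  assumes "norm a' \<le> 1" "norm b' \<le> 1" "0 \<le> A" "0 \<le> A'" "0 \<le> B" "0 \<le> B'"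
  shows "\<bar>weighted_gap a A b B - weighted_gap a' A' b' B'\<bar>
    \<le> cmod (a - a') + \<bar>A - A'\<bar> + cmod (b - b') + \<bar>B - B'\<bar>"
proof -
  let ?a = "a * of_real (exp (- A))" and ?a' = "a' * of_real (exp (- A'))"
  let ?b = "b * of_real (exp (- B))" and ?b' = "b' * of_real (exp (- B'))"
  have "\<bar>weighted_gap a A b B - weighted_gap a' A' b' B'\<bar> \<le> cmod ((?a - ?b) - (?a' - ?b'))"
    unfolding weighted_gap_def by (rule norm_triangle_ineq3)
  also have "\<dots> \<le> cmod (?a - ?a') + cmod (?b - ?b')"
    by (rule order_trans[OF _ norm_triangle_ineq4]) (simp add: algebra_simps)
  also have "\<dots> \<le> (cmod (a - a') + \<bar>A - A'\<bar>) + (cmod (b - b') + \<bar>B - B'\<bar>)"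
    using assms by (intro add_mono norm_mult_exp_minus_diff_le)
  finally show ?thesis by simp
qed

lemma matrix_vector_mult_component_row: "(F *v x) $ j = row j F \<bullet> (x :: real^'n)"
  by (simp add: matrix_vector_mult_def inner_vec_def row_def mult.commute)

lemma row_eq_axis_vector_matrix_mult: "row j F = axis j 1 v* (F :: real^'n^'m)"
proof -
  have "(axis j 1 v* F) $ i = F $ j $ i" for i
    by (simp add: vector_matrix_mult_def axis_def if_distrib[where f="\<lambda>x. x * _"] cong: if_cong)
  then show ?thesis by (simp add: vec_eq_iff row_def)
qed

lemma qform_conjugate: "qform (F ** S ** transpose F) t = (t v* F) \<bullet> (S *v (t v* F))"
proof -
  have "(F ** S ** transpose F) *v t = F *v (S *v (t v* F))"
    by (simp flip: matrix_vector_mul_assoc)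
  then show ?thesis unfolding qform_def by (simp add: dot_lmul_matrix)
qed

lemma qdiag_conjugate:
  "qdiag (F ** S ** transpose F) t = (\<Sum>j\<in>UNIV. (t$j *\<^sub>R row j F) \<bullet> (S *v (t$j *\<^sub>R row j F)))"
  unfolding qdiag_def
proof (rule sum.cong[OF refl])
  fix j
  have "(F ** S ** transpose F) $ j $ j = axis j 1 \<bullet> ((F ** S ** transpose F) *v axis j 1)"
    by (simp add: inner_axis' matrix_vector_mult_basis column_def)
  also have "\<dots> = row j F \<bullet> (S *v row j F)"
    using qform_conjugate[of F S "axis j 1"] by (simp add: row_eq_axis_vector_matrix_mult qform_def)
  finally show "(F ** S ** transpose F) $ j $ j * (t $ j)\<^sup>2 = (t$j *\<^sub>R row j F) \<bullet> (S *v (t$j *\<^sub>R row j F))"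
    by (simp add: matrix_vector_mult_scaleR power2_eq_square algebra_simps)
qed

lemma norm_vector_matrix_mult_le: "norm ((t :: real^'m) v* (F :: real^'n^'m)) \<le> onorm (\<lambda>v. F *v v) * norm t"
proof -
  let ?v = "t v* F"
  have "norm ?v ^ 2 = t \<bullet> (F *v ?v)"
    by (simp add: power2_norm_eq_inner dot_lmul_matrix)
  also have "\<dots> \<le> norm t * norm (F *v ?v)" by (rule norm_cauchy_schwarz)
  also have "\<dots> \<le> norm t * (onorm (\<lambda>v. F *v v) * norm ?v)"
    by (intro mult_left_mono onorm) auto
  finally have "norm ?v * norm ?v \<le> (onorm (\<lambda>v. F *v v) * norm t) * norm ?v"
    by (simp add: power2_eq_square mult_ac)
  then show ?thesis
    by (cases "norm ?v = 0") (auto simp: mult_le_cancel_right intro!: mult_nonneg_nonneg onorm_pos_le)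
qed

lemma norm_scaled_row_le:
  assumes "onorm (\<lambda>v. F *v v) \<le> 1"
  shows "norm (t$j *\<^sub>R row j (F :: real^'n^'m)) \<le> norm t"
proof -
  have "norm (row j F) \<le> 1"
    using norm_vector_matrix_mult_le[of "axis j 1" F] assms
    by (simp add: row_eq_axis_vector_matrix_mult norm_axis_1)
  then have "\<bar>t$j\<bar> * norm (row j F) \<le> norm t * 1"
    using component_le_norm_cart[of t j] by (intro mult_mono) auto
  then show ?thesis by simp
qed

lemma abs_quadratic_form_diff_le:
  fixes u :: "real^'n"
  assumes u: "norm u \<le> R" and E: "(\<Sum>i\<in>UNIV. \<Sum>j\<in>UNIV. \<bar>A$i$j - B$i$j\<bar>) \<le> E"
  shows "\<bar>u \<bullet> (A *v u) - u \<bullet> (B *v u)\<bar> \<le> R\<^sup>2 * E"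
proof -
  have "u \<bullet> (A *v u) - u \<bullet> (B *v u) = (\<Sum>i\<in>UNIV. \<Sum>j\<in>UNIV. u$i * (A$i$j - B$i$j) * u$j)"
    by (simp add: inner_vec_def matrix_vector_mult_def sum_distrib_left algebra_simps
        flip: sum_subtractf)
  also have "\<bar>\<dots>\<bar> \<le> (\<Sum>i\<in>UNIV. \<Sum>j\<in>UNIV. \<bar>u$i * (A$i$j - B$i$j) * u$j\<bar>)"
    by (rule order_trans[OF sum_abs]) (intro sum_mono sum_abs)
  also have "\<dots> \<le> (\<Sum>i\<in>UNIV. \<Sum>j\<in>UNIV. R\<^sup>2 * \<bar>A$i$j - B$i$j\<bar>)"
  proof (intro sum_mono)
    fix i j
    have "\<bar>u$i * (A$i$j - B$i$j) * u$j\<bar> = (\<bar>u$i\<bar> * \<bar>u$j\<bar>) * \<bar>A$i$j - B$i$j\<bar>"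
      by (simp add: abs_mult)
    also have "\<dots> \<le> (R * R) * \<bar>A$i$j - B$i$j\<bar>"
      using u component_le_norm_cart[of u i] component_le_norm_cart[of u j]
      by (intro mult_right_mono mult_mono) auto
    finally show "\<bar>u$i * (A$i$j - B$i$j) * u$j\<bar> \<le> R\<^sup>2 * \<bar>A$i$j - B$i$j\<bar>"
      by (simp add: power2_eq_square)
  qed
  also have "\<dots> \<le> R\<^sup>2 * E"
    using E by (simp add: mult_left_mono flip: sum_distrib_left)
  finally show ?thesis .
qed

abbreviation char_vec :: "(real^'k) measure \<Rightarrow> real^'k \<Rightarrow> complex" where
  "char_vec P u \<equiv> \<integral>x. cis (u \<bullet> x) \<partial>P"

abbreviation emp_char :: "(nat \<Rightarrow> real^'k) \<Rightarrow> nat \<Rightarrow> real^'k \<Rightarrow> complex" where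
  "emp_char xs n u \<equiv> (1 / of_nat n) * (\<Sum>r<n. cis (u \<bullet> xs r))"

lemma Delta_pop_eq_weighted_gap:
  "Delta_pop P t F = weighted_gap (char_vec P (t v* F))
     (\<Sum>j\<in>UNIV. (t$j *\<^sub>R row j F) \<bullet> (sec_mom P *v (t$j *\<^sub>R row j F)))
     (\<Prod>j\<in>UNIV. char_vec P (t$j *\<^sub>R row j F))
     ((t v* F) \<bullet> (sec_mom P *v (t v* F)))"
  unfolding Delta_pop_def Let_def weighted_gap_def qdiag_conjugate qform_conjugate
  by (simp add: matrix_vector_mult_component_row flip: dot_lmul_matrix)

lemma Delta_emp_eq_weighted_gap:
  "Delta_emp xs n t F = weighted_gap (emp_char xs n (t v* F))
     (\<Sum>j\<in>UNIV. (t$j *\<^sub>R row j F) \<bullet> (emp_sec_mom xs n *v (t$j *\<^sub>R row j F)))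
     (\<Prod>j\<in>UNIV. emp_char xs n (t$j *\<^sub>R row j F))
     ((t v* F) \<bullet> (emp_sec_mom xs n *v (t v* F)))"
  unfolding Delta_emp_def Let_def weighted_gap_def qdiag_conjugate qform_conjugate
  by (simp add: matrix_vector_mult_component_row flip: dot_lmul_matrix)

lemma norm_mean_cis_le_1: "cmod ((1 / of_nat n) * (\<Sum>r<n. cis (f r))) \<le> 1"
proof (cases "n = 0")
  case False
  have "cmod (\<Sum>r<n. cis (f r)) \<le> real n"
    using norm_sum[of "\<lambda>r. cis (f r)" "{..<n}"] by simp
  then show ?thesis using False by (simp add: norm_mult norm_divide field_simps)
qed simp

lemma emp_sec_mom_psd: "0 \<le> u \<bullet> (emp_sec_mom xs n *v u)"
proof -
  have "u \<bullet> (emp_sec_mom xs n *v u)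
      = (\<Sum>i\<in>UNIV. \<Sum>j\<in>UNIV. u$i * ((1 / real n) * (\<Sum>r<n. xs r $ i * xs r $ j)) * u$j)"
    by (simp add: inner_vec_def matrix_vector_mult_def emp_sec_mom_def sum_distrib_left mult_ac)
  also have "\<dots> = (1 / real n) * (\<Sum>r<n. (u \<bullet> xs r)^2)"
    by (simp add: sum_distrib_left sum_distrib_right mult_ac sum.swap[of _ "{..<n}"]
        inner_vec_def power2_eq_square)
  finally show ?thesis by (simp add: sum_nonneg)
qed

lemma Delta_pop_Delta_emp_diff_le:
  fixes P :: "(real^'k) measure" and t :: "real^'k" and F :: "real^'k^'k"
  assumes F: "onorm (\<lambda>v. F *v v) \<le> 1"
    and psd: "\<And>u. 0 \<le> u \<bullet> (sec_mom P *v u)"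
    and char_le: "\<And>u. cmod (char_vec P u) \<le> 1"
    and D: "\<And>u. norm u \<le> norm t \<Longrightarrow> cmod (char_vec P u - emp_char xs n u) \<le> D"
    and E: "(\<Sum>i\<in>UNIV. \<Sum>j\<in>UNIV. \<bar>sec_mom P $i$j - emp_sec_mom xs n $i$j\<bar>) \<le> E"
  shows "\<bar>Delta_pop P t F - Delta_emp xs n t F\<bar> \<le> (real CARD('k) + 1) * (D + norm t ^ 2 * E)"
proof -
  define v where "v = t v* F"
  define w where "w j = t$j *\<^sub>R row j F" for j
  let ?S = "sec_mom P" and ?S' = "emp_sec_mom xs n"
  have nv: "norm v \<le> norm t"
    using order_trans[OF norm_vector_matrix_mult_le mult_right_mono[OF F norm_ge_zero]]
    unfolding v_def by simp
  have nw: "norm (w j) \<le> norm t" for j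
    unfolding w_def by (rule norm_scaled_row_le[OF F])
  have Q: "\<bar>u \<bullet> (?S *v u) - u \<bullet> (?S' *v u)\<bar> \<le> norm t ^ 2 * E" if "norm u \<le> norm t" for u
    by (rule abs_quadratic_form_diff_le[OF that E])
  have "\<bar>Delta_pop P t F - Delta_emp xs n t F\<bar>
      \<le> cmod (char_vec P v - emp_char xs n v)
        + \<bar>(\<Sum>j\<in>UNIV. w j \<bullet> (?S *v w j)) - (\<Sum>j\<in>UNIV. w j \<bullet> (?S' *v w j))\<bar>
        + cmod ((\<Prod>j\<in>UNIV. char_vec P (w j)) - (\<Prod>j\<in>UNIV. emp_char xs n (w j)))
        + \<bar>v \<bullet> (?S *v v) - v \<bullet> (?S' *v v)\<bar>"
    unfolding Delta_pop_eq_weighted_gap Delta_emp_eq_weighted_gap v_def[symmetric] w_def[symmetric]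
  proof (intro weighted_gap_diff_le)
    show "norm (emp_char xs n v) \<le> 1" by (rule norm_mean_cis_le_1)
    show "norm (\<Prod>j\<in>UNIV. emp_char xs n (w j)) \<le> 1"
      unfolding prod_norm[symmetric] by (intro prod_le_1 conjI norm_ge_zero norm_mean_cis_le_1)
  qed (simp_all add: psd emp_sec_mom_psd sum_nonneg)
  also have "\<dots> \<le> D + (\<Sum>j\<in>(UNIV::'k set). norm t ^ 2 * E) + (\<Sum>j\<in>(UNIV::'k set). D) + norm t ^ 2 * E"
  proof (intro add_mono D nv Q)
    show "\<bar>(\<Sum>j\<in>UNIV. w j \<bullet> (?S *v w j)) - (\<Sum>j\<in>UNIV. w j \<bullet> (?S' *v w j))\<bar>
        \<le> (\<Sum>j\<in>(UNIV::'k set). norm t ^ 2 * E)"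
      unfolding sum_subtractf[symmetric] by (rule order_trans[OF sum_abs]) (intro sum_mono Q nw)
    show "cmod ((\<Prod>j\<in>UNIV. char_vec P (w j)) - (\<Prod>j\<in>UNIV. emp_char xs n (w j)))
        \<le> (\<Sum>j\<in>(UNIV::'k set). D)"
      by (rule order_trans[OF norm_prod_diff[OF char_le norm_mean_cis_le_1]]) (intro sum_mono D nw)
  qed
  also have "\<dots> = (real CARD('k) + 1) * (D + norm t ^ 2 * E)"
    by (simp add: algebra_simps)
  finally show ?thesis .
qed

section \<open>Concentration for an i.i.d. sample\<close>

lemma borel_measurable_cis [measurable]:
  fixes f :: "'a \<Rightarrow> real"
  assumes [measurable]: "f \<in> borel_measurable N"
  shows "(\<lambda>x. cis (f x)) \<in> borel_measurable N"
  unfolding cis_conv_exp by measurable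

lemma abs_mult_le_sum_squares: "\<bar>a * b\<bar> \<le> a\<^sup>2 + (b::real)\<^sup>2"
proof -
  have "2 * (\<bar>a\<bar> * \<bar>b\<bar>) \<le> a\<^sup>2 + b\<^sup>2"
    using sum_squares_bound[of "\<bar>a\<bar>" "\<bar>b\<bar>"] by (simp add: mult.assoc)
  moreover have "0 \<le> \<bar>a\<bar> * \<bar>b\<bar>" by simp
  ultimately show ?thesis unfolding abs_mult by linarith
qed

locale iid_sample = prob_space M for M :: "'a measure" +
  fixes X :: "nat \<Rightarrow> 'a \<Rightarrow> real^'k" and P :: "(real^'k) measure"
  assumes measurable_sample [measurable]: "\<And>r. X r \<in> borel_measurable M"
    and indep_sample: "indep_vars (\<lambda>_. borel) X UNIV"
    and distr_sample: "\<And>r. distr M borel (X r) = P"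
begin

lemma sets_P [measurable_cong]: "sets P = sets borel"
  using distr_sample[of 0] by (metis sets_distr)

lemma prob_space_P: "prob_space P"
  using distr_sample[of 0] prob_space_distr[OF measurable_sample[of 0]] by simp

lemma integral_sample:
  fixes f :: "real^'k \<Rightarrow> 'b::{banach,second_countable_topology}"
  assumes [measurable]: "f \<in> borel_measurable borel"
  shows "(\<integral>\<omega>. f (X r \<omega>) \<partial>M) = (\<integral>x. f x \<partial>P)"
  using integral_distr[of "X r" M borel f] distr_sample[of r] by simp

lemma integrable_sample_iff:
  fixes f :: "real^'k \<Rightarrow> 'b::{banach,second_countable_topology}"
  assumes [measurable]: "f \<in> borel_measurable borel"
  shows "integrable M (\<lambda>\<omega>. f (X r \<omega>)) \<longleftrightarrow> integrable P f"
  using integrable_distr_eq[of "X r" M borel f] distr_sample[of r] by simp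

lemma prob_sum_deviation_ge_le:
  fixes f :: "real^'k \<Rightarrow> real"
  assumes [measurable]: "f \<in> borel_measurable borel" and f_bounded: "\<And>x. \<bar>f x\<bar> \<le> 1"
    and "0 < n" "0 \<le> s"
  shows "prob {\<omega>\<in>space M. real n * s \<le> \<bar>(\<Sum>r<n. f (X r \<omega>)) - real n * (\<integral>x. f x \<partial>P)\<bar>}
    \<le> 2 * exp (- (real n * s\<^sup>2 / 2))"
proof -
  interpret Hoeffding_ineq M "{..<n}" "\<lambda>r \<omega>. f (X r \<omega>)" "\<lambda>_. -1" "\<lambda>_. 1"
    "\<Sum>r<n. expectation (\<lambda>\<omega>. f (X r \<omega>))"
  proof unfold_locales
    show "indep_vars (\<lambda>_. borel) (\<lambda>r \<omega>. f (X r \<omega>)) {..<n}"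
      by (rule indep_vars_compose2[OF indep_vars_subset[OF indep_sample]]) auto
    show "AE \<omega> in M. f (X r \<omega>) \<in> {- 1..1}" for r
      using f_bounded by (auto simp: abs_le_iff)
  qed auto
  have "prob {\<omega>\<in>space M. real n * s \<le> \<bar>(\<Sum>r<n. f (X r \<omega>)) - real n * (\<integral>x. f x \<partial>P)\<bar>}
      \<le> 2 * exp (-2 * (real n * s)\<^sup>2 / (\<Sum>r<n. (1 - (-1::real))\<^sup>2))"
    using Hoeffding_ineq_abs_ge[of "real n * s"] assms by (simp add: integral_sample)
  also have "-2 * (real n * s)\<^sup>2 / (\<Sum>r<n. (1 - (-1::real))\<^sup>2) = - (real n * s\<^sup>2 / 2)"
    using assms by (simp add: power2_eq_square field_simps)
  finally show ?thesis .
qed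

lemma prob_emp_char_deviation_ge_le:
  assumes n: "0 < n" and s: "0 \<le> s"
  shows "prob {\<omega>\<in>space M. 2 * s \<le> cmod (char_vec P u - emp_char (\<lambda>r. X r \<omega>) n u)}
    \<le> 4 * exp (- (real n * s\<^sup>2 / 2))"
proof -
  interpret P: prob_space P by (rule prob_space_P)
  have "integrable P (\<lambda>x. cis (u \<bullet> x))"
    by (rule P.integrable_const_bound[where B=1]) auto
  then have Re: "Re (char_vec P u) = (\<integral>x. cos (u \<bullet> x) \<partial>P)"
    and Im: "Im (char_vec P u) = (\<integral>x. sin (u \<bullet> x) \<partial>P)"
    by (simp_all flip: integral_Re integral_Im)
  define dev where "dev g \<omega> = \<bar>(\<Sum>r<n. g (u \<bullet> X r \<omega>)) - real n * (\<integral>x. g (u \<bullet> x) \<partial>P)\<bar>"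
    for g :: "real \<Rightarrow> real" and \<omega>
  have dev_eq: "dev g \<omega> = real n * \<bar>(\<integral>x. g (u \<bullet> x) \<partial>P) - (1 / real n) * (\<Sum>r<n. g (u \<bullet> X r \<omega>))\<bar>"
    for g \<omega>
    using n by (simp add: dev_def abs_mult[symmetric] field_simps abs_minus_commute)
  have "{\<omega>\<in>space M. 2 * s \<le> cmod (char_vec P u - emp_char (\<lambda>r. X r \<omega>) n u)}
      \<subseteq> {\<omega>\<in>space M. real n * s \<le> dev cos \<omega>} \<union> {\<omega>\<in>space M. real n * s \<le> dev sin \<omega>}"
  proof safe
    fix \<omega> assume "\<omega> \<in> space M" "\<not> real n * s \<le> dev sin \<omega>"
      and big: "2 * s \<le> cmod (char_vec P u - emp_char (\<lambda>r. X r \<omega>) n u)"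
    then have "\<bar>Im (char_vec P u - emp_char (\<lambda>r. X r \<omega>) n u)\<bar> < s"
      using n by (simp add: dev_eq Im Im_divide_of_nat mult_less_cancel_left_pos)
    then have "s \<le> \<bar>Re (char_vec P u - emp_char (\<lambda>r. X r \<omega>) n u)\<bar>"
      using big cmod_le[of "char_vec P u - emp_char (\<lambda>r. X r \<omega>) n u"] by linarith
    then show "real n * s \<le> dev cos \<omega>"
      using n by (simp add: dev_eq Re Re_divide_of_nat)
  qed
  then have "prob {\<omega>\<in>space M. 2 * s \<le> cmod (char_vec P u - emp_char (\<lambda>r. X r \<omega>) n u)}
      \<le> prob {\<omega>\<in>space M. real n * s \<le> dev cos \<omega>} + prob {\<omega>\<in>space M. real n * s \<le> dev sin \<omega>}"
    by (intro order_trans[OF finite_measure_mono measure_Un_le]) (auto simp: dev_def)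
  also have "\<dots> \<le> 2 * exp (- (real n * s\<^sup>2 / 2)) + 2 * exp (- (real n * s\<^sup>2 / 2))"
    unfolding dev_def using n s by (intro add_mono prob_sum_deviation_ge_le) auto
  finally show ?thesis by simp
qed

lemma prob_mean_norm_ge_le:
  assumes "integrable P (\<lambda>x. x)" and "0 < n" and "0 < c"
  shows "prob {\<omega>\<in>space M. c \<le> (1 / real n) * (\<Sum>r<n. norm (X r \<omega>))} \<le> (\<integral>x. norm x \<partial>P) / c"
proof -
  have int: "integrable M (\<lambda>\<omega>. norm (X r \<omega>))" for r
    using integrable_norm[OF assms(1)] by (subst integrable_sample_iff) auto
  have "prob {\<omega>\<in>space M. c \<le> (1 / real n) * (\<Sum>r<n. norm (X r \<omega>))}
      \<le> (\<integral>\<omega>. (1 / real n) * (\<Sum>r<n. norm (X r \<omega>)) \<partial>M) / c"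
    by (rule integral_Markov_inequality_measure[where A="space M"])
      (use int assms in \<open>auto intro!: AE_I2 sum_nonneg divide_nonneg_nonneg\<close>)
  also have "(\<integral>\<omega>. (1 / real n) * (\<Sum>r<n. norm (X r \<omega>)) \<partial>M) = (\<integral>x. norm x \<partial>P)"
    using assms int by (simp add: integral_sample)
  finally show ?thesis .
qed

lemma prob_mean_norm_large_le:
  assumes "integrable P (\<lambda>x. x)" and "0 < n" and \<epsilon>: "0 < \<epsilon>"
  shows "prob {\<omega>\<in>space M. 3 * ((\<integral>x. norm x \<partial>P) + 1) / \<epsilon> \<le> (1 / real n) * (\<Sum>r<n. norm (X r \<omega>))}
    \<le> \<epsilon> / 3"
proof -
  have m: "0 \<le> (\<integral>x. norm x \<partial>P)" by (intro integral_nonneg_AE) auto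
  then have "0 < 3 * ((\<integral>x. norm x \<partial>P) + 1) / \<epsilon>"
    using \<epsilon> by (intro divide_pos_pos mult_pos_pos add_nonneg_pos) auto
  with assms have "prob {\<omega>\<in>space M. 3 * ((\<integral>x. norm x \<partial>P) + 1) / \<epsilon> \<le> (1 / real n) * (\<Sum>r<n. norm (X r \<omega>))}
      \<le> (\<integral>x. norm x \<partial>P) / (3 * ((\<integral>x. norm x \<partial>P) + 1) / \<epsilon>)"
    by (intro prob_mean_norm_ge_le)
  also have "\<dots> \<le> \<epsilon> / 3"
  proof -
    have "x / (3 * (x + 1) / \<epsilon>) \<le> \<epsilon> / 3" if "0 \<le> x" for x
      using that \<epsilon> by (simp add: field_simps)
    then show ?thesis using m .
  qed
  finally show ?thesis .
qed

context
  fixes g :: "real^'k \<Rightarrow> real" and \<mu> V :: real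
  assumes g_measurable [measurable]: "g \<in> borel_measurable borel"
    and g_square_integrable: "integrable P (\<lambda>x. (g x)\<^sup>2)"
  defines "\<mu> \<equiv> \<integral>x. g x \<partial>P" and "V \<equiv> \<integral>x. (g x - \<mu>)\<^sup>2 \<partial>P"
begin

lemma centered_sample_products:
  shows "integrable M (\<lambda>\<omega>. (g (X r \<omega>) - \<mu>) * (g (X s \<omega>) - \<mu>))"
    and "(\<integral>\<omega>. (g (X r \<omega>) - \<mu>) * (g (X s \<omega>) - \<mu>) \<partial>M) = (if r = s then V else 0)"
proof -
  interpret P: prob_space P by (rule prob_space_P)
  define Y where "Y r \<omega> = g (X r \<omega>) - \<mu>" for r \<omega>
  have int_g: "integrable P g"
    by (rule P.square_integrable_imp_integrable[OF _ g_square_integrable])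
      (simp add: measurable_cong_sets[OF sets_P])
  have int_Y: "integrable M (Y r)" for r
    unfolding Y_def using int_g by (subst integrable_sample_iff[where f="\<lambda>x. g x - \<mu>"]) auto
  have int_Y2: "integrable M (\<lambda>\<omega>. (Y r \<omega>)\<^sup>2)" for r
    unfolding Y_def using g_square_integrable int_g
    by (subst integrable_sample_iff[where f="\<lambda>x. (g x - \<mu>)\<^sup>2"]) (auto simp: power2_diff)
  have EY: "(\<integral>\<omega>. Y r \<omega> \<partial>M) = 0" for r
    using int_g unfolding Y_def
    by (subst integral_sample[where f="\<lambda>x. g x - \<mu>"]) (auto simp: \<mu>_def P.prob_space)
  show "integrable M (\<lambda>\<omega>. (g (X r \<omega>) - \<mu>) * (g (X s \<omega>) - \<mu>))"
  proof (rule Bochner_Integration.integrable_bound[where f="\<lambda>\<omega>. (Y r \<omega>)\<^sup>2 + (Y s \<omega>)\<^sup>2"])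
    show "AE \<omega> in M. norm ((g (X r \<omega>) - \<mu>) * (g (X s \<omega>) - \<mu>)) \<le> norm ((Y r \<omega>)\<^sup>2 + (Y s \<omega>)\<^sup>2)"
      unfolding Y_def by (intro AE_I2) (simp add: abs_mult_le_sum_squares)
  qed (use int_Y2 in \<open>auto simp: Y_def\<close>)
  show "(\<integral>\<omega>. (g (X r \<omega>) - \<mu>) * (g (X s \<omega>) - \<mu>) \<partial>M) = (if r = s then V else 0)"
  proof (cases "r = s")
    case True
    have "(\<integral>\<omega>. (g (X r \<omega>) - \<mu>)\<^sup>2 \<partial>M) = V"
      unfolding V_def by (rule integral_sample) measurable
    then show ?thesis using True by (simp add: power2_eq_square)
  next
    case False
    have "indep_vars (\<lambda>_. borel) Y {r, s}"
      unfolding Y_def by (rule indep_vars_compose2[OF indep_vars_subset[OF indep_sample]]) auto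
    then have "(\<integral>\<omega>. (\<Prod>i\<in>{r, s}. Y i \<omega>) \<partial>M) = (\<Prod>i\<in>{r, s}. \<integral>\<omega>. Y i \<omega> \<partial>M)"
      by (intro indep_vars_lebesgue_integral) (auto intro: int_Y)
    then show ?thesis using False by (simp add: EY[unfolded Y_def] Y_def)
  qed
qed

lemma prob_mean_deviation_ge_le_variance:
  assumes n: "0 < n" and a: "0 < a"
  shows "prob {\<omega>\<in>space M. a \<le> \<bar>(1 / real n) * (\<Sum>r<n. g (X r \<omega>)) - \<mu>\<bar>} \<le> V / (real n * a\<^sup>2)"
proof -
  define T where "T \<omega> = (\<Sum>r<n. g (X r \<omega>) - \<mu>)" for \<omega>
  have T_square: "(T \<omega>)\<^sup>2 = (\<Sum>r<n. \<Sum>s<n. (g (X r \<omega>) - \<mu>) * (g (X s \<omega>) - \<mu>))" for \<omega>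
    by (simp add: T_def power2_eq_square sum_product)
  have int_T: "integrable M (\<lambda>\<omega>. (T \<omega>)\<^sup>2)"
    unfolding T_square using centered_sample_products(1) by auto
  have "a \<le> \<bar>(1 / real n) * (\<Sum>r<n. g (X r \<omega>)) - \<mu>\<bar> \<longleftrightarrow> (real n * a)\<^sup>2 \<le> (T \<omega>)\<^sup>2" for \<omega>
  proof -
    have "T \<omega> = real n * ((1 / real n) * (\<Sum>r<n. g (X r \<omega>)) - \<mu>)"
      using n by (simp add: T_def sum_subtractf field_simps)
    then have "a \<le> \<bar>(1 / real n) * (\<Sum>r<n. g (X r \<omega>)) - \<mu>\<bar> \<longleftrightarrow> \<bar>real n * a\<bar> \<le> \<bar>T \<omega>\<bar>"
      using n a by (simp add: abs_mult)
    then show ?thesis by (simp add: abs_le_square_iff)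
  qed
  then have "prob {\<omega>\<in>space M. a \<le> \<bar>(1 / real n) * (\<Sum>r<n. g (X r \<omega>)) - \<mu>\<bar>}
      = prob {\<omega>\<in>space M. (real n * a)\<^sup>2 \<le> (T \<omega>)\<^sup>2}"
    by simp
  also have "\<dots> \<le> (\<integral>\<omega>. (T \<omega>)\<^sup>2 \<partial>M) / (real n * a)\<^sup>2"
    using int_T n a by (intro integral_Markov_inequality_measure[where A="space M"]) auto
  also have "(\<integral>\<omega>. (T \<omega>)\<^sup>2 \<partial>M) = real n * V"
    unfolding T_square by (simp add: centered_sample_products)
  also have "real n * V / (real n * a)\<^sup>2 = V / (real n * a\<^sup>2)"
    using n a by (simp add: power2_eq_square field_simps)
  finally show ?thesis .
qed

end

end

section \<open>Moments, Lipschitz bounds and a grid in the ball\<close>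

lemma power4_le_4_exp_square: "(y::real) ^ 4 \<le> 4 * exp (y\<^sup>2)"
proof -
  have "y\<^sup>2 / 2 \<le> exp (y\<^sup>2 / 2)" using exp_ge_add_one_self[of "y\<^sup>2 / 2"] by linarith
  then have "(y\<^sup>2 / 2)\<^sup>2 \<le> (exp (y\<^sup>2 / 2))\<^sup>2" by (intro power_mono) auto
  also have "(exp (y\<^sup>2 / 2))\<^sup>2 = exp (y\<^sup>2)" by (simp flip: exp_double)
  finally show ?thesis by (simp add: power2_eq_square power4_eq_xxxx field_simps)
qed

lemma norm_cis_diff_le: "cmod (cis a - cis b) \<le> \<bar>a - b\<bar>"
proof -
  have "cis a - cis b = cis b * (cis (a - b) - 1)"
    by (simp add: algebra_simps cis_mult)
  then have "cmod (cis a - cis b) = cmod (cis (a - b) - 1)"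
    by (simp add: norm_mult)
  also have "\<dots> \<le> \<bar>a - b\<bar>"
    using iexp_approx1[of "a - b" 0] by (simp add: cis_conv_exp)
  finally show ?thesis .
qed

lemma norm_char_vec_le_1:
  assumes "prob_space P"
  shows "cmod (char_vec P u) \<le> 1"
proof -
  interpret prob_space P by (rule assms)
  have "cmod (char_vec P u) \<le> (\<integral>x. cmod (cis (u \<bullet> x)) \<partial>P)"
    by (rule integral_norm_bound)
  then show ?thesis by (simp add: prob_space)
qed

context
  fixes P :: "(real^'k) measure"
  assumes sets_P: "sets P = sets borel"
begin

lemma borel_measurable_P: "f \<in> borel_measurable borel \<Longrightarrow> f \<in> borel_measurable P"
  by (simp only: measurable_cong_sets[OF sets_P refl])

lemma subgaussian_integrable_power4:
  assumes "subgaussian P \<sigma>"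
  shows "integrable P (\<lambda>x. (x$i) ^ 4)"
proof (rule Bochner_Integration.integrable_bound)
  define s where "s = \<sigma> + 1"
  have s: "\<sigma> < s" "0 < s"
    using assms by (auto simp: s_def subgaussian_def)
  have "integrable P (\<lambda>x. exp ((axis i 1 \<bullet> x / s)\<^sup>2))"
    using assms s unfolding subgaussian_def by (auto simp: norm_axis_1)
  then show "integrable P (\<lambda>x. 4 * s ^ 4 * exp ((x$i / s)\<^sup>2))"
    by (simp add: inner_axis')
  show "AE x in P. norm ((x$i) ^ 4) \<le> norm (4 * s ^ 4 * exp ((x$i / s)\<^sup>2))"
  proof (intro AE_I2)
    fix x :: "real^'k"
    have "(x$i) ^ 4 = s ^ 4 * (x$i / s) ^ 4" using s by (simp add: field_simps)
    also have "\<dots> \<le> s ^ 4 * (4 * exp ((x$i / s)\<^sup>2))"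
      by (intro mult_left_mono power4_le_4_exp_square) auto
    finally show "norm ((x$i) ^ 4) \<le> norm (4 * s ^ 4 * exp ((x$i / s)\<^sup>2))"
      using s by simp
  qed
qed (intro borel_measurable_P; measurable)

lemma integrable_component_prod_square:
  assumes "\<And>i. integrable P (\<lambda>x. (x$i) ^ 4)"
  shows "integrable P (\<lambda>x. (x$i * x$j)\<^sup>2)"
proof (rule Bochner_Integration.integrable_bound[where f="\<lambda>x. (x$i) ^ 4 + (x$j) ^ 4"])
  show "AE x in P. norm ((x$i * x$j)\<^sup>2) \<le> norm ((x$i) ^ 4 + (x$j) ^ 4)"
  proof (intro AE_I2)
    fix x :: "real^'k"
    have "2 * (x$i)\<^sup>2 * (x$j)\<^sup>2 \<le> ((x$i)\<^sup>2)\<^sup>2 + ((x$j)\<^sup>2)\<^sup>2" by (rule sum_squares_bound)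
    moreover have "0 \<le> (x$i)\<^sup>2 * (x$j)\<^sup>2" by simp
    moreover have "(x$i * x$j)\<^sup>2 = (x$i)\<^sup>2 * (x$j)\<^sup>2" by (simp add: power_mult_distrib)
    moreover have "(x$i) ^ 4 = ((x$i)\<^sup>2)\<^sup>2" "(x$j) ^ 4 = ((x$j)\<^sup>2)\<^sup>2" by simp_all
    ultimately have "(x$i * x$j)\<^sup>2 \<le> (x$i) ^ 4 + (x$j) ^ 4"
      by linarith
    then show "norm ((x$i * x$j)\<^sup>2) \<le> norm ((x$i) ^ 4 + (x$j) ^ 4)"
      by simp
  qed
qed (use assms in \<open>auto intro: borel_measurable_P\<close>)

lemma integrable_component_prod:
  assumes "finite_measure P" and "integrable P (\<lambda>x. (x$i * x$j)\<^sup>2)"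
  shows "integrable P (\<lambda>x. x$i * x$j)"
proof (rule Bochner_Integration.integrable_bound[where f="\<lambda>x. 1 + (x$i * x$j)\<^sup>2"])
  interpret finite_measure P by (rule assms(1))
  show "integrable P (\<lambda>x. 1 + (x$i * x$j)\<^sup>2)" using assms(2) by auto
  show "AE x in P. norm (x$i * x$j) \<le> norm (1 + (x$i * x$j)\<^sup>2)"
  proof (intro AE_I2)
    fix x :: "real^'k"
    have "0 \<le> (\<bar>x$i * x$j\<bar> - 1)\<^sup>2" by simp
    then show "norm (x$i * x$j) \<le> norm (1 + (x$i * x$j)\<^sup>2)"
      by (simp add: power2_eq_square algebra_simps)
  qed
qed (intro borel_measurable_P; measurable)

lemma subgaussian_integrable_component_prod:
  assumes "prob_space P" and "subgaussian P \<sigma>"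
  shows "integrable P (\<lambda>x. (x$i * x$j)\<^sup>2)" and "integrable P (\<lambda>x. x$i * x$j)"
proof -
  show square: "integrable P (\<lambda>x. (x$i * x$j)\<^sup>2)"
    by (intro integrable_component_prod_square subgaussian_integrable_power4[OF assms(2)])
  interpret prob_space P by (rule assms(1))
  show "integrable P (\<lambda>x. x$i * x$j)"
    by (intro integrable_component_prod[OF _ square]) unfold_locales
qed

lemma sec_mom_psd:
  assumes "\<And>i j. integrable P (\<lambda>x. x$i * x$j)"
  shows "0 \<le> u \<bullet> (sec_mom P *v u)"
proof -
  have "u \<bullet> (sec_mom P *v u) = (\<Sum>i\<in>UNIV. \<Sum>j\<in>UNIV. u$i * ((\<integral>x. x$i * x$j \<partial>P) * u$j))"
    by (simp add: inner_vec_def matrix_vector_mult_def sec_mom_def sum_distrib_left)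
  also have "\<dots> = (\<integral>x. (\<Sum>i\<in>UNIV. \<Sum>j\<in>UNIV. u$i * ((x$i * x$j) * u$j)) \<partial>P)"
    using assms by (simp add: Bochner_Integration.integral_sum)
  also have "\<dots> = (\<integral>x. (u \<bullet> x)\<^sup>2 \<partial>P)"
    by (simp add: inner_vec_def power2_eq_square sum_product mult_ac)
  finally show ?thesis by simp
qed

lemma char_vec_lipschitz:
  assumes "prob_space P" and int: "integrable P (\<lambda>x. x)"
  shows "cmod (char_vec P u - char_vec P g) \<le> norm (u - g) * (\<integral>x. norm x \<partial>P)"
proof -
  interpret prob_space P by (rule assms)
  have int_cis: "integrable P (\<lambda>x. cis (w \<bullet> x))" for w
  proof (rule integrable_const_bound[where B=1])
    show "(\<lambda>x. cis (w \<bullet> x)) \<in> borel_measurable P" by (intro borel_measurable_P) measurable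
  qed simp
  have "cmod (char_vec P u - char_vec P g) = cmod (\<integral>x. cis (u \<bullet> x) - cis (g \<bullet> x) \<partial>P)"
    using int_cis by simp
  also have "\<dots> \<le> (\<integral>x. cmod (cis (u \<bullet> x) - cis (g \<bullet> x)) \<partial>P)" by (rule integral_norm_bound)
  also have "\<dots> \<le> (\<integral>x. norm (u - g) * norm x \<partial>P)"
  proof (rule integral_mono)
    show "integrable P (\<lambda>x. norm (u - g) * norm x)" using integrable_norm[OF int] by auto
    fix x
    have "cmod (cis (u \<bullet> x) - cis (g \<bullet> x)) \<le> \<bar>(u - g) \<bullet> x\<bar>"
      using norm_cis_diff_le[of "u \<bullet> x" "g \<bullet> x"] by (simp add: inner_diff_left)
    also have "\<dots> \<le> norm (u - g) * norm x" by (rule Cauchy_Schwarz_ineq2)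
    finally show "cmod (cis (u \<bullet> x) - cis (g \<bullet> x)) \<le> norm (u - g) * norm x" .
  qed (use int_cis in auto)
  finally show ?thesis by simp
qed

end

lemma emp_char_lipschitz:
  "cmod (emp_char xs n u - emp_char xs n g) \<le> norm (u - g) * ((1 / real n) * (\<Sum>r<n. norm (xs r)))"
proof -
  have "cmod (emp_char xs n u - emp_char xs n g)
      = (1 / real n) * cmod (\<Sum>r<n. cis (u \<bullet> xs r) - cis (g \<bullet> xs r))"
    by (simp only: right_diff_distrib[symmetric] sum_subtractf[symmetric] norm_mult) (simp add: norm_divide)
  also have "\<dots> \<le> (1 / real n) * (\<Sum>r<n. norm (u - g) * norm (xs r))"
  proof (intro mult_left_mono order_trans[OF norm_sum] sum_mono)
    fix r
    have "cmod (cis (u \<bullet> xs r) - cis (g \<bullet> xs r)) \<le> \<bar>(u - g) \<bullet> xs r\<bar>"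
      using norm_cis_diff_le[of "u \<bullet> xs r" "g \<bullet> xs r"] by (simp add: inner_diff_left)
    also have "\<dots> \<le> norm (u - g) * norm (xs r)" by (rule Cauchy_Schwarz_ineq2)
    finally show "cmod (cis (u \<bullet> xs r) - cis (g \<bullet> xs r)) \<le> norm (u - g) * norm (xs r)" .
  qed simp
  finally show ?thesis by (simp add: sum_distrib_left mult_ac)
qed

definition cube_grid :: "real \<Rightarrow> real \<Rightarrow> (real^'k) set" where
  "cube_grid R h = (\<lambda>z. \<chi> i. h * of_int (z i)) `
     Pi UNIV (\<lambda>_. {- int (nat \<lceil>R / h\<rceil> + 1) .. int (nat \<lceil>R / h\<rceil> + 1)})"

lemma finite_cube_grid: "finite (cube_grid R h :: (real^'k) set)"
proof -
  have "finite (Pi\<^sub>E (UNIV::'k set) (\<lambda>_. {- int (nat \<lceil>R / h\<rceil> + 1) .. int (nat \<lceil>R / h\<rceil> + 1)}))"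
    by (intro finite_PiE) auto
  then show ?thesis unfolding cube_grid_def PiE_UNIV_domain by simp
qed

lemma card_cube_grid_le:
  "card (cube_grid R h :: (real^'k) set) \<le> (2 * (nat \<lceil>R / h\<rceil> + 1) + 1) ^ CARD('k)"
proof -
  define m where "m = nat \<lceil>R / h\<rceil> + 1"
  have "card (cube_grid R h :: (real^'k) set) \<le> card (Pi\<^sub>E (UNIV::'k set) (\<lambda>_. {- int m .. int m}))"
    unfolding cube_grid_def PiE_UNIV_domain m_def
    by (rule card_image_le) (simp add: finite_PiE flip: PiE_UNIV_domain)
  also have "\<dots> = (\<Prod>i\<in>(UNIV::'k set). card {- int m .. int m})" by (rule card_PiE) simp
  also have "card {- int m .. int m} = 2 * m + 1" by simp
  finally show ?thesis by (simp add: m_def)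
qed

lemma card_cube_grid_inverse_sqrt_le:
  assumes "1 \<le> n" "0 \<le> R"
  shows "real (card (cube_grid R (1 / sqrt (real n)) :: (real^'k) set))
    \<le> ((2 * R + 5) * sqrt (real n)) ^ CARD('k)"
proof -
  let ?c = "nat \<lceil>R * sqrt (real n)\<rceil>"
  have "real ?c = of_int \<lceil>R * sqrt (real n)\<rceil>"
    using assms by simp
  then have "real ?c \<le> R * sqrt (real n) + 1"
    using ceiling_correct[of "R * sqrt (real n)"] by linarith
  moreover have "1 \<le> sqrt (real n)" using assms by simp
  moreover have "(2 * R + 5) * sqrt (real n) = 2 * (R * sqrt (real n)) + 5 * sqrt (real n)"
    by (simp add: algebra_simps)
  moreover have "real (2 * (?c + 1) + 1) = 2 * real ?c + 3" by simp
  ultimately have base: "real (2 * (?c + 1) + 1) \<le> (2 * R + 5) * sqrt (real n)"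
    by linarith
  have "card (cube_grid R (1 / sqrt (real n)) :: (real^'k) set) \<le> (2 * (?c + 1) + 1) ^ CARD('k)"
    using card_cube_grid_le[of R "1 / sqrt (real n)", where 'k='k] by simp
  then have "real (card (cube_grid R (1 / sqrt (real n)) :: (real^'k) set))
      \<le> real (2 * (?c + 1) + 1) ^ CARD('k)"
    by (simp only: of_nat_power[symmetric] of_nat_le_iff)
  also have "\<dots> \<le> ((2 * R + 5) * sqrt (real n)) ^ CARD('k)"
    using base by (intro power_mono) auto
  finally show ?thesis .
qed

lemma cube_grid_approx:
  assumes h: "0 < h" and u: "norm (u :: real^'k) \<le> R"
  shows "\<exists>g\<in>cube_grid R h. norm (u - g) \<le> real CARD('k) * h"
proof -
  define m where "m = int (nat \<lceil>R / h\<rceil> + 1)"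
  define z where "z i = \<lfloor>u$i / h\<rfloor>" for i
  define g :: "real^'k" where "g = (\<chi> i. h * of_int (z i))"
  have z_bound: "\<bar>z i\<bar> \<le> m" for i
  proof -
    have "\<bar>u$i\<bar> \<le> R" using component_le_norm_cart[of u i] u by linarith
    then have "\<bar>u$i / h\<bar> \<le> R / h" using h by (simp add: abs_divide divide_right_mono)
    then show ?thesis
      unfolding z_def m_def using le_of_int_ceiling[of "R / h"] by linarith
  qed
  then have "z \<in> Pi UNIV (\<lambda>_. {- m .. m})"
    by (simp add: Pi_iff abs_le_iff minus_le_iff)
  then have "g \<in> cube_grid R h"
    unfolding cube_grid_def g_def m_def[symmetric] by (rule imageI)
  moreover have "norm (u - g) \<le> real CARD('k) * h"
  proof -
    have "norm (u - g) \<le> (\<Sum>i\<in>UNIV. \<bar>(u - g)$i\<bar>)" by (rule norm_le_l1_cart)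
    also have "\<dots> \<le> (\<Sum>i\<in>(UNIV::'k set). h)"
    proof (intro sum_mono)
      fix i
      have "of_int (z i) \<le> u$i / h" "u$i / h < of_int (z i) + 1" unfolding z_def by linarith+
      then have "h * of_int (z i) \<le> u$i" "u$i < h * of_int (z i) + h"
        using h by (simp_all add: field_simps)
      then show "\<bar>(u - g)$i\<bar> \<le> h" by (simp add: g_def)
    qed
    finally show ?thesis by simp
  qed
  ultimately show ?thesis by blast
qed

section \<open>Comparison with the rate\<close>

definition sqrt_log_rate :: "real \<Rightarrow> real \<Rightarrow> real \<Rightarrow> real \<Rightarrow> nat \<Rightarrow> real" where
  "sqrt_log_rate k \<alpha> \<beta> \<gamma> n = \<alpha> * sqrt ((k * ln (real n) + \<beta>) / real n) + \<gamma> / sqrt (real n)"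

lemma sqrt_log_rate_le:
  fixes \<alpha> \<beta> \<gamma> k C :: real
  assumes "0 \<le> \<alpha>" "0 \<le> \<beta>" "0 \<le> \<gamma>" "0 \<le> k" "1 \<le> C" and n: "2 \<le> n"
  shows "sqrt_log_rate k \<alpha> \<beta> \<gamma> n
    \<le> (\<alpha> * sqrt (k + 2 * \<beta>) + \<gamma> * sqrt 2) * sqrt (ln (real n * C) / real n)"
proof -
  define L where "L = sqrt (ln (real n * C) / real n)"
  have "2 / 3 \<le> ln (2::real)" by (rule ln2_ge_two_thirds)
  moreover have "ln 2 \<le> ln (real n)" using n by simp
  moreover have "ln (real n) \<le> ln (real n * C)"
    using n assms(5) by (simp add: ln_mult)
  ultimately have ln_n: "1 \<le> 2 * ln (real n * C)" "ln (real n) \<le> ln (real n * C)" by linarith+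
  have "k * ln (real n) + \<beta> \<le> (k + 2 * \<beta>) * ln (real n * C)"
    using mult_left_mono[OF ln_n(2) assms(4)] mult_left_mono[OF ln_n(1) assms(2)]
    by (simp add: algebra_simps)
  then have "(k * ln (real n) + \<beta>) / real n \<le> (k + 2 * \<beta>) * ln (real n * C) / real n"
    by (rule divide_right_mono) simp
  then have "sqrt ((k * ln (real n) + \<beta>) / real n) \<le> sqrt ((k + 2 * \<beta>) * ln (real n * C) / real n)"
    by (rule real_sqrt_le_mono)
  also have "\<dots> = sqrt (k + 2 * \<beta>) * L"
    unfolding L_def by (metis real_sqrt_mult times_divide_eq_right)
  finally have "\<alpha> * sqrt ((k * ln (real n) + \<beta>) / real n) \<le> \<alpha> * (sqrt (k + 2 * \<beta>) * L)"
    using assms(1) by (rule mult_left_mono)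
  moreover have "1 / real n \<le> 2 * ln (real n * C) / real n"
    using ln_n(1) by (rule divide_right_mono) simp
  then have "sqrt (1 / real n) \<le> sqrt (2 * ln (real n * C) / real n)"
    by (rule real_sqrt_le_mono)
  then have "1 / sqrt (real n) \<le> sqrt 2 * L"
    unfolding L_def by (metis real_sqrt_mult times_divide_eq_right real_sqrt_divide real_sqrt_one)
  then have "\<gamma> * (1 / sqrt (real n)) \<le> \<gamma> * (sqrt 2 * L)"
    using assms(3) by (rule mult_left_mono)
  ultimately show ?thesis
    by (simp add: sqrt_log_rate_def L_def algebra_simps)
qed

lemma rate_ratio_bounded:
  fixes \<alpha> \<beta> \<gamma> c Q C k :: real
  assumes nonneg: "0 \<le> \<alpha>" "0 \<le> \<beta>" "0 \<le> \<gamma>" "0 \<le> c" "0 \<le> Q" "0 \<le> k" and C: "1 \<le> C"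
  shows "\<exists>B. \<forall>n\<ge>1. \<forall>y. 0 \<le> y \<and> y \<le> sqrt_log_rate k \<alpha> \<beta> \<gamma> n
     \<longrightarrow> \<bar>y / (c * sqrt (Q * ln (real n * C) / real n))\<bar> \<le> B"
proof -
  define B where "B = max ((\<alpha> * sqrt (k + 2 * \<beta>) + \<gamma> * sqrt 2) / (c * sqrt Q))
    ((\<alpha> * sqrt \<beta> + \<gamma>) / (c * sqrt (Q * ln C)))"
  have "\<bar>y / (c * sqrt (Q * ln (real n * C) / real n))\<bar> \<le> B"
    if n: "1 \<le> n" and y: "0 \<le> y" "y \<le> sqrt_log_rate k \<alpha> \<beta> \<gamma> n"
    for n y
  proof -
    define r where "r = c * sqrt (Q * ln (real n * C) / real n)"
    have "1 \<le> real n * C" using mult_mono[of 1 "real n" 1 C] n C by simp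
    then have r: "0 \<le> r" unfolding r_def using nonneg by simp
    have "\<bar>y / r\<bar> \<le> B"
    proof (cases "r = 0")
      case False
      then have r_pos: "0 < r" using r by simp
      show ?thesis
      proof (cases "n = 1")
        case True
        then have "y / r \<le> (\<alpha> * sqrt \<beta> + \<gamma>) / (c * sqrt (Q * ln C))"
          using y r_pos by (simp add: sqrt_log_rate_def r_def divide_right_mono)
        then show ?thesis using y r_pos by (simp add: B_def)
      next
        case False
        have "y \<le> (\<alpha> * sqrt (k + 2 * \<beta>) + \<gamma> * sqrt 2) * sqrt (ln (real n * C) / real n)"
          using y sqrt_log_rate_le[OF nonneg(1-3,6) C, of n] False n by simp
        moreover have r_eq: "r = c * sqrt Q * sqrt (ln (real n * C) / real n)"
          unfolding r_def by (metis real_sqrt_mult times_divide_eq_right mult.assoc)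
        ultimately have "y / r \<le> (\<alpha> * sqrt (k + 2 * \<beta>) + \<gamma> * sqrt 2) * sqrt (ln (real n * C) / real n) / r"
          using r_pos by (intro divide_right_mono) auto
        also have "\<dots> = (\<alpha> * sqrt (k + 2 * \<beta>) + \<gamma> * sqrt 2) / (c * sqrt Q)"
          using r_pos unfolding r_eq by (cases "sqrt (ln (real n * C) / real n) = 0") auto
        finally have "y / r \<le> (\<alpha> * sqrt (k + 2 * \<beta>) + \<gamma> * sqrt 2) / (c * sqrt Q)" .
        then show ?thesis using y r_pos by (simp add: B_def)
      qed
    next
      case True
      \<comment> \<open>r = 0 happens e.g. for n = 1 and C = 1; then y / r = 0 as x / 0 = 0\<close>
      have "0 \<le> (\<alpha> * sqrt (k + 2 * \<beta>) + \<gamma> * sqrt 2) / (c * sqrt Q)"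
        using nonneg by simp
      then show ?thesis by (simp add: True B_def)
    qed
    then show ?thesis by (simp add: r_def)
  qed
  then show ?thesis by blast
qed

lemma rateA3_dominates:
  fixes t :: "real^'k"
  assumes "0 \<le> \<alpha>" "0 \<le> \<beta>" "0 \<le> \<gamma>"
  shows "\<exists>B. \<forall>n\<ge>1. \<forall>y. 0 \<le> y \<and> y \<le> sqrt_log_rate (real CARD('k)) \<alpha> \<beta> \<gamma> n
     \<longrightarrow> \<bar>y / rateA3 P \<sigma> t n\<bar> \<le> B"
proof -
  let ?nS = "onorm (\<lambda>v. sec_mom P *v v)"
  have "0 \<le> ?nS" by (intro onorm_pos_le) simp
  then show ?thesis
    unfolding rateA3_def Let_def
    by (intro rate_ratio_bounded assms) auto
qed

section \<open>The bound on an event of high probability\<close>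

lemma char_vec_emp_char_diff_le_on_ball:
  fixes P :: "(real^'k) measure" and xs :: "nat \<Rightarrow> real^'k"
  assumes P: "prob_space P" "sets P = sets borel" "integrable P (\<lambda>x. x)" and h: "0 < h"
    and grid: "\<And>g. g \<in> cube_grid R h \<Longrightarrow> cmod (char_vec P g - emp_char xs n g) \<le> d"
    and mean_norm: "(1 / real n) * (\<Sum>r<n. norm (xs r)) \<le> c"
    and u: "norm u \<le> R"
  shows "cmod (char_vec P u - emp_char xs n u) \<le> d + real CARD('k) * h * ((\<integral>x. norm x \<partial>P) + c)"
proof -
  obtain g where g: "g \<in> cube_grid R h" and ug: "norm (u - g) \<le> real CARD('k) * h"
    using cube_grid_approx[OF h u] by blast
  have "cmod (char_vec P u - char_vec P g) \<le> norm (u - g) * (\<integral>x. norm x \<partial>P)"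
    by (rule char_vec_lipschitz[OF P(2,1,3)])
  also have "\<dots> \<le> real CARD('k) * h * (\<integral>x. norm x \<partial>P)"
    using ug by (intro mult_right_mono integral_nonneg_AE) auto
  finally have lip_char: "cmod (char_vec P u - char_vec P g) \<le> real CARD('k) * h * (\<integral>x. norm x \<partial>P)" .
  have "cmod (emp_char xs n g - emp_char xs n u) \<le> norm (g - u) * ((1 / real n) * (\<Sum>r<n. norm (xs r)))"
    by (rule emp_char_lipschitz)
  also have "\<dots> \<le> real CARD('k) * h * c"
    using ug mean_norm h by (intro mult_mono) (auto simp: norm_minus_commute sum_nonneg)
  finally have "cmod (char_vec P g - emp_char xs n u) \<le> d + real CARD('k) * h * c"
    by (intro norm_diff_triangle_le[OF grid[OF g]])
  then have "cmod (char_vec P u - emp_char xs n u)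
      \<le> real CARD('k) * h * (\<integral>x. norm x \<partial>P) + (d + real CARD('k) * h * c)"
    by (intro norm_diff_triangle_le[OF lip_char])
  then show ?thesis by (simp add: algebra_simps)
qed

lemma SUP_abs_bounds:
  fixes f :: "'b \<Rightarrow> real"
  assumes "x \<in> A" and "\<And>a. a \<in> A \<Longrightarrow> \<bar>f a\<bar> \<le> N"
  shows "0 \<le> (SUP a\<in>A. \<bar>f a\<bar>) \<and> (SUP a\<in>A. \<bar>f a\<bar>) \<le> N"
proof
  have "bdd_above ((\<lambda>a. \<bar>f a\<bar>) ` A)" using assms(2) by (intro bdd_aboveI2) auto
  then show "0 \<le> (SUP a\<in>A. \<bar>f a\<bar>)"
    using cSUP_upper[OF assms(1)] by (meson abs_ge_zero order_trans)
  show "(SUP a\<in>A. \<bar>f a\<bar>) \<le> N"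
    using assms by (intro cSUP_least) auto
qed

lemma onorm_matrix_vector_mult_zero: "onorm ((*v) (0 :: real^'n^'m)) = 0"
proof -
  have "(*v) (0 :: real^'n^'m) = (\<lambda>v. 0)" by (rule ext) simp
  then show ?thesis by (simp add: onorm_zero)
qed

definition sup_Delta_diff :: "(real^'k) measure \<Rightarrow> real^'k \<Rightarrow> (nat \<Rightarrow> real^'k) \<Rightarrow> nat \<Rightarrow> real" where
  "sup_Delta_diff P t xs n =
    (SUP F\<in>{F. onorm (\<lambda>v. F *v v) \<le> 1}. \<bar>Delta_pop P t F - Delta_emp xs n t F\<bar>)"

lemma sup_Delta_diff_le_on_good_sample:
  fixes P :: "(real^'k) measure" and t :: "real^'k"
  assumes P: "prob_space P" "sets P = sets borel" "integrable P (\<lambda>x. x)"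
    and int_prod: "\<And>i j. integrable P (\<lambda>x. x$i * x$j)" and h: "0 < h"
    and grid: "\<And>g. g \<in> cube_grid (norm t) h \<Longrightarrow> cmod (char_vec P g - emp_char xs n g) \<le> d"
    and mean_norm: "(1 / real n) * (\<Sum>r<n. norm (xs r)) \<le> c"
    and mom: "\<And>i j. \<bar>(1 / real n) * (\<Sum>r<n. xs r $ i * xs r $ j) - (\<integral>x. x$i * x$j \<partial>P)\<bar> \<le> a"
  shows "0 \<le> sup_Delta_diff P t xs n \<and> sup_Delta_diff P t xs n \<le> (real CARD('k) + 1) *
    (d + real CARD('k) * h * ((\<integral>x. norm x \<partial>P) + c) + norm t ^ 2 * (real CARD('k) ^ 2 * a))"
  unfolding sup_Delta_diff_def
proof (intro SUP_abs_bounds[where x="0 :: real^'k^'k"])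
  show "(0 :: real^'k^'k) \<in> {F. onorm (\<lambda>v. F *v v) \<le> 1}"
    by (simp add: onorm_matrix_vector_mult_zero)
  fix F :: "real^'k^'k" assume "F \<in> {F. onorm (\<lambda>v. F *v v) \<le> 1}"
  then have F: "onorm (\<lambda>v. F *v v) \<le> 1" by simp
  show "\<bar>Delta_pop P t F - Delta_emp xs n t F\<bar> \<le> (real CARD('k) + 1) *
    (d + real CARD('k) * h * ((\<integral>x. norm x \<partial>P) + c) + norm t ^ 2 * (real CARD('k) ^ 2 * a))"
  proof (rule Delta_pop_Delta_emp_diff_le[OF F])
    show "0 \<le> u \<bullet> (sec_mom P *v u)" for u
      by (rule sec_mom_psd[OF P(2) int_prod])
    show "cmod (char_vec P u) \<le> 1" for u
      by (rule norm_char_vec_le_1[OF P(1)])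
    show "cmod (char_vec P u - emp_char xs n u) \<le> d + real CARD('k) * h * ((\<integral>x. norm x \<partial>P) + c)"
      if "norm u \<le> norm t" for u
      by (rule char_vec_emp_char_diff_le_on_ball[OF P h grid mean_norm that])
    have "(\<Sum>i\<in>UNIV. \<Sum>j\<in>UNIV. \<bar>sec_mom P $i$j - emp_sec_mom xs n $i$j\<bar>) \<le> (\<Sum>i\<in>(UNIV::'k set). \<Sum>j\<in>(UNIV::'k set). a)"
      using mom by (intro sum_mono) (simp add: sec_mom_def emp_sec_mom_def abs_minus_commute)
    then show "(\<Sum>i\<in>UNIV. \<Sum>j\<in>UNIV. \<bar>sec_mom P $i$j - emp_sec_mom xs n $i$j\<bar>) \<le> real CARD('k) ^ 2 * a"
      by (simp add: power2_eq_square)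
  qed
qed

context iid_sample
begin

lemma prob_cube_grid_deviation_le:
  assumes n: "1 \<le> n" and R: "0 \<le> R" and \<epsilon>: "0 < \<epsilon>"
  defines "L \<equiv> max 0 (ln (12 * (2 * R + 5) ^ CARD('k) / \<epsilon>))"
  defines "s \<equiv> sqrt ((real CARD('k) * ln (real n) + 2 * L) / real n)"
  shows "prob (\<Union>g\<in>cube_grid R (1 / sqrt (real n)).
      {\<omega>\<in>space M. 2 * s \<le> cmod (char_vec P g - emp_char (\<lambda>r. X r \<omega>) n g)}) \<le> \<epsilon> / 3"
proof -
  let ?\<Gamma> = "cube_grid R (1 / sqrt (real n)) :: (real^'k) set"
  define W where "W = 2 * R + 5"
  have W: "0 < W" using R by (simp add: W_def)
  have sqrt_n: "0 < sqrt (real n)" using n by simp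
  have half: "real n * s\<^sup>2 / 2 = L + real CARD('k) * ln (sqrt (real n))"
    using n unfolding s_def L_def by (simp add: ln_sqrt field_simps)
  have exp_k: "exp (real CARD('k) * ln (sqrt (real n))) = sqrt (real n) ^ CARD('k)"
    using sqrt_n by (simp add: exp_of_nat_mult)
  have exp_eq: "exp (- (real n * s\<^sup>2 / 2)) = exp (- L) / sqrt (real n) ^ CARD('k)"
    unfolding half by (simp add: exp_diff exp_k)
  have "0 < 12 * W ^ CARD('k) / \<epsilon>" using W \<epsilon> by simp
  moreover have "ln (12 * W ^ CARD('k) / \<epsilon>) \<le> L" by (simp add: L_def W_def)
  ultimately have "12 * W ^ CARD('k) / \<epsilon> \<le> exp L"
    by (metis exp_ln exp_le_cancel_iff)
  then have exp_L: "exp (- L) \<le> \<epsilon> / (12 * W ^ CARD('k))"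
    using W \<epsilon> by (simp add: exp_minus field_simps)
  have "prob (\<Union>g\<in>?\<Gamma>. {\<omega>\<in>space M. 2 * s \<le> cmod (char_vec P g - emp_char (\<lambda>r. X r \<omega>) n g)})
      \<le> (\<Sum>g\<in>?\<Gamma>. prob {\<omega>\<in>space M. 2 * s \<le> cmod (char_vec P g - emp_char (\<lambda>r. X r \<omega>) n g)})"
    by (intro finite_measure_subadditive_finite finite_cube_grid) auto
  also have "\<dots> \<le> (\<Sum>g\<in>?\<Gamma>. 4 * exp (- (real n * s\<^sup>2 / 2)))"
    using n by (intro sum_mono prob_emp_char_deviation_ge_le) (auto simp: s_def L_def)
  also have "\<dots> \<le> (W * sqrt (real n)) ^ CARD('k) * (4 * exp (- (real n * s\<^sup>2 / 2)))"
    using card_cube_grid_inverse_sqrt_le[OF n R, where 'k='k]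
    by (simp add: W_def mult_right_mono)
  also have "\<dots> = 4 * W ^ CARD('k) * exp (- L)"
    using sqrt_n by (simp add: exp_eq power_mult_distrib)
  also have "\<dots> \<le> \<epsilon> / 3"
    using W \<epsilon> mult_left_mono[OF exp_L, of "4 * W ^ CARD('k)"] by (simp add: field_simps)
  finally show ?thesis .
qed

lemma sec_mom_deviation_event:
  "{\<omega>\<in>space M. a \<le> \<bar>(1 / real n) * (\<Sum>r<n. X r \<omega> $ i * X r \<omega> $ j) - c\<bar>} \<in> events"
proof -
  have [measurable]: "(\<lambda>x::real^'k. x$i * x$j) \<in> borel_measurable borel" by measurable
  have "{\<omega>\<in>space M. a \<le> \<bar>(1 / real n) * (\<Sum>r<n. g (X r \<omega>)) - c\<bar>} \<in> events"
    if [measurable]: "g \<in> borel_measurable borel" for g :: "real^'k \<Rightarrow> real"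
    by measurable
  from this[of "\<lambda>x. x$i * x$j"] show ?thesis by simp
qed

lemma prob_sec_mom_deviation_le:
  assumes int2: "\<And>i j. integrable P (\<lambda>x. (x$i * x$j)\<^sup>2)" and n: "1 \<le> n" and \<epsilon>: "0 < \<epsilon>"
  defines "V \<equiv> \<Sum>i\<in>UNIV. \<Sum>j\<in>UNIV. \<integral>x. (x$i * x$j - (\<integral>x. x$i * x$j \<partial>P))\<^sup>2 \<partial>P"
  defines "a \<equiv> sqrt (3 * (V + 1) / \<epsilon>) / sqrt (real n)"
  shows "prob (\<Union>(i, j)\<in>UNIV. {\<omega>\<in>space M.
      a \<le> \<bar>(1 / real n) * (\<Sum>r<n. X r \<omega> $ i * X r \<omega> $ j) - (\<integral>x. x$i * x$j \<partial>P)\<bar>}) \<le> \<epsilon> / 3"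
proof -
  define v where "v i j = (\<integral>x. (x$i * x$j - (\<integral>x. x$i * x$j \<partial>P))\<^sup>2 \<partial>P)" for i j :: 'k
  have V: "0 \<le> V" unfolding V_def by (intro sum_nonneg integral_nonneg_AE) auto
  have a: "0 < a" "real n * a\<^sup>2 = 3 * (V + 1) / \<epsilon>"
    using n V \<epsilon> by (simp_all add: a_def power_divide)
  have "prob (\<Union>(i, j)\<in>UNIV. {\<omega>\<in>space M.
      a \<le> \<bar>(1 / real n) * (\<Sum>r<n. X r \<omega> $ i * X r \<omega> $ j) - (\<integral>x. x$i * x$j \<partial>P)\<bar>})
    \<le> (\<Sum>(i, j)\<in>UNIV. prob {\<omega>\<in>space M.
      a \<le> \<bar>(1 / real n) * (\<Sum>r<n. X r \<omega> $ i * X r \<omega> $ j) - (\<integral>x. x$i * x$j \<partial>P)\<bar>})"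
    unfolding case_prod_unfold by (intro finite_measure_subadditive_finite image_subsetI sec_mom_deviation_event) simp
  also have "\<dots> \<le> (\<Sum>(i, j)\<in>UNIV. v i j / (real n * a\<^sup>2))"
  proof (intro sum_mono, clarify)
    fix i j :: 'k
    have [measurable]: "(\<lambda>x::real^'k. x$i * x$j) \<in> borel_measurable borel" by measurable
    show "prob {\<omega>\<in>space M. a \<le> \<bar>(1 / real n) * (\<Sum>r<n. X r \<omega> $ i * X r \<omega> $ j)
        - (\<integral>x. x$i * x$j \<partial>P)\<bar>} \<le> v i j / (real n * a\<^sup>2)"
      unfolding v_def
      by (rule prob_mean_deviation_ge_le_variance[where g="\<lambda>x. x$i * x$j"]) (use int2 n a in auto)
  qed
  also have "\<dots> = (\<Sum>(i, j)\<in>UNIV. v i j) / (real n * a\<^sup>2)"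
    by (simp add: sum_divide_distrib case_prod_unfold)
  also have "(\<Sum>(i, j)\<in>UNIV. v i j) = V"
    unfolding V_def v_def sum.cartesian_product UNIV_Times_UNIV ..
  also have "V / (real n * a\<^sup>2) \<le> \<epsilon> / 3"
    using V \<epsilon> by (simp add: a field_simps)
  finally show ?thesis .
qed

lemma good_sample_event:
  fixes R \<epsilon> :: real
  assumes int: "integrable P (\<lambda>x. x)" and int2: "\<And>i j. integrable P (\<lambda>x. (x$i * x$j)\<^sup>2)"
    and n: "1 \<le> n" and R: "0 \<le> R" and \<epsilon>: "0 < \<epsilon>"
  defines "s \<equiv> sqrt ((real CARD('k) * ln (real n)
      + 2 * max 0 (ln (12 * (2 * R + 5) ^ CARD('k) / \<epsilon>))) / real n)"
    and "c \<equiv> 3 * ((\<integral>x. norm x \<partial>P) + 1) / \<epsilon>"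
    and "a \<equiv> sqrt (3 * ((\<Sum>i\<in>UNIV. \<Sum>j\<in>UNIV. \<integral>x. (x$i * x$j - (\<integral>x. x$i * x$j \<partial>P))\<^sup>2 \<partial>P) + 1)
      / \<epsilon>) / sqrt (real n)"
  obtains A where "A \<in> sets M" "measure M (space M - A) \<le> \<epsilon>"
    and "\<And>\<omega> g. \<omega> \<in> A \<Longrightarrow> g \<in> cube_grid R (1 / sqrt (real n)) \<Longrightarrow>
      cmod (char_vec P g - emp_char (\<lambda>r. X r \<omega>) n g) \<le> 2 * s"
    and "\<And>\<omega>. \<omega> \<in> A \<Longrightarrow> (1 / real n) * (\<Sum>r<n. norm (X r \<omega>)) \<le> c"
    and "\<And>\<omega> i j. \<omega> \<in> A \<Longrightarrow>
      \<bar>(1 / real n) * (\<Sum>r<n. X r \<omega> $ i * X r \<omega> $ j) - (\<integral>x. x$i * x$j \<partial>P)\<bar> \<le> a"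
proof -
  define E1 where "E1 = (\<Union>g\<in>cube_grid R (1 / sqrt (real n)).
    {\<omega>\<in>space M. 2 * s \<le> cmod (char_vec P g - emp_char (\<lambda>r. X r \<omega>) n g)})"
  define E2 where "E2 = {\<omega>\<in>space M. c \<le> (1 / real n) * (\<Sum>r<n. norm (X r \<omega>))}"
  define E3 where "E3 = (\<Union>(i, j)\<in>UNIV. {\<omega>\<in>space M.
    a \<le> \<bar>(1 / real n) * (\<Sum>r<n. X r \<omega> $ i * X r \<omega> $ j) - (\<integral>x. x$i * x$j \<partial>P)\<bar>})"
  have "E3 \<in> sets M"
    unfolding E3_def case_prod_unfold by (intro sets.finite_UN sec_mom_deviation_event) simp
  then have sets: "E1 \<in> sets M" "E2 \<in> sets M" "E3 \<in> sets M"
    unfolding E1_def E2_def by (auto intro!: sets.finite_UN finite_cube_grid)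
  have "prob E1 \<le> \<epsilon> / 3"
    unfolding E1_def s_def by (rule prob_cube_grid_deviation_le[OF n R \<epsilon>])
  moreover have "prob E2 \<le> \<epsilon> / 3"
    unfolding E2_def c_def using n by (intro prob_mean_norm_large_le int \<epsilon>) auto
  moreover have "prob E3 \<le> \<epsilon> / 3"
    unfolding E3_def a_def by (rule prob_sec_mom_deviation_le[OF int2 n \<epsilon>])
  ultimately have "measure M (space M - (space M - (E1 \<union> E2 \<union> E3))) \<le> \<epsilon>"
    using sets measure_Un_le[OF sets(1,2)] measure_Un_le[OF sets.Un[OF sets(1,2)] sets(3)]
    by (simp add: Diff_Diff_Int Int_absorb1 sets.sets_into_space)
  then show thesis
    using sets by (intro that[of "space M - (E1 \<union> E2 \<union> E3)"])
      (auto simp: E1_def E2_def E3_def not_le intro: less_imp_le)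
qed

lemma sup_Delta_diff_bound_with_prob:
  fixes t :: "real^'k" and \<sigma> \<epsilon> :: real
  assumes int: "integrable P (\<lambda>x. x)" and sg: "subgaussian P \<sigma>" and \<epsilon>: "0 < \<epsilon>"
  shows "\<exists>\<alpha> \<beta> \<gamma>. 0 \<le> \<alpha> \<and> 0 \<le> \<beta> \<and> 0 \<le> \<gamma> \<and> (\<forall>n\<ge>1. \<exists>A\<in>sets M. measure M (space M - A) \<le> \<epsilon> \<and>
     (\<forall>\<omega>\<in>A. 0 \<le> sup_Delta_diff P t (\<lambda>r. X r \<omega>) n
       \<and> sup_Delta_diff P t (\<lambda>r. X r \<omega>) n \<le> sqrt_log_rate (real CARD('k)) \<alpha> \<beta> \<gamma> n))"
proof -
  have int2: "integrable P (\<lambda>x. (x$i * x$j)\<^sup>2)" and int1: "integrable P (\<lambda>x. x$i * x$j)" for i j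
    using subgaussian_integrable_component_prod[OF sets_P prob_space_P sg] by auto
  define k where "k = real CARD('k)"
  define m where "m = (\<integral>x. norm x \<partial>P)"
  define c where "c = 3 * (m + 1) / \<epsilon>"
  define K where "K = sqrt (3 * ((\<Sum>i\<in>UNIV. \<Sum>j\<in>UNIV. \<integral>x. (x$i * x$j - (\<integral>x. x$i * x$j \<partial>P))\<^sup>2 \<partial>P) + 1) / \<epsilon>)"
  define L where "L = max 0 (ln (12 * (2 * norm t + 5) ^ CARD('k) / \<epsilon>))"
  define \<gamma> where "\<gamma> = (k + 1) * (k * (m + c) + (norm t)\<^sup>2 * k\<^sup>2 * K)"
  have "\<exists>A\<in>sets M. measure M (space M - A) \<le> \<epsilon> \<and>
     (\<forall>\<omega>\<in>A. 0 \<le> sup_Delta_diff P t (\<lambda>r. X r \<omega>) n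
       \<and> sup_Delta_diff P t (\<lambda>r. X r \<omega>) n \<le> sqrt_log_rate k (2 * (k + 1)) (2 * L) \<gamma> n)"
    if n: "1 \<le> n" for n
  proof -
    define h where "h = 1 / sqrt (real n)"
    define s where "s = sqrt ((k * ln (real n) + 2 * L) / real n)"
    obtain A where A: "A \<in> sets M" "measure M (space M - A) \<le> \<epsilon>"
      and grid: "\<And>\<omega> g. \<omega> \<in> A \<Longrightarrow> g \<in> cube_grid (norm t) h \<Longrightarrow>
        cmod (char_vec P g - emp_char (\<lambda>r. X r \<omega>) n g) \<le> 2 * s"
      and mean: "\<And>\<omega>. \<omega> \<in> A \<Longrightarrow> (1 / real n) * (\<Sum>r<n. norm (X r \<omega>)) \<le> c"
      and mom: "\<And>\<omega> i j. \<omega> \<in> A \<Longrightarrow>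
        \<bar>(1 / real n) * (\<Sum>r<n. X r \<omega> $ i * X r \<omega> $ j) - (\<integral>x. x$i * x$j \<partial>P)\<bar> \<le> K / sqrt (real n)"
      using good_sample_event[OF int int2 n norm_ge_zero[of t] \<epsilon>]
      unfolding h_def s_def c_def m_def K_def L_def k_def by blast
    have "(k + 1) * (2 * s + k * h * (m + c) + (norm t)\<^sup>2 * (k\<^sup>2 * (K / sqrt (real n))))
        = sqrt_log_rate k (2 * (k + 1)) (2 * L) \<gamma> n"
      by (simp add: sqrt_log_rate_def \<gamma>_def s_def h_def algebra_simps add_divide_distrib)
    moreover have "0 \<le> sup_Delta_diff P t (\<lambda>r. X r \<omega>) n \<and> sup_Delta_diff P t (\<lambda>r. X r \<omega>) n
        \<le> (k + 1) * (2 * s + k * h * (m + c) + (norm t)\<^sup>2 * (k\<^sup>2 * (K / sqrt (real n))))"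
      if "\<omega> \<in> A" for \<omega>
      unfolding k_def m_def using n
      by (intro sup_Delta_diff_le_on_good_sample[OF prob_space_P sets_P int int1 _
          grid[OF that] mean[OF that] mom[OF that]]) (simp add: h_def)
    ultimately show ?thesis
      using A by auto
  qed
  moreover have "0 \<le> \<gamma>"
    unfolding \<gamma>_def k_def c_def K_def m_def using \<epsilon>
    by (intro mult_nonneg_nonneg add_nonneg_nonneg divide_nonneg_nonneg real_sqrt_ge_zero
        sum_nonneg integral_nonneg_AE) auto
  ultimately show ?thesis
    by (intro exI[of _ "2 * (k + 1)"] exI[of _ "2 * L"] exI[of _ \<gamma>]) (auto simp: k_def L_def)
qed

end

theorem theoremA3:
  fixes M :: "'a measure" and X :: "nat \<Rightarrow> 'a \<Rightarrow> real^'k"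
    and P :: "(real^'k) measure" and \<sigma> :: real and t :: "real^'k"
  assumes "prob_space M"
    and "\<And>r. X r \<in> borel_measurable M"
    and "prob_space.indep_vars M (\<lambda>_. borel) X UNIV"
    and "\<And>r. distr M borel (X r) = P"
    and "integrable P (\<lambda>x. x)" and "(\<integral>x. x \<partial>P) = 0"
    and "subgaussian P \<sigma>"
  shows "\<forall>\<epsilon>>0. \<exists>B. \<forall>n\<ge>1. \<exists>A\<in>sets M. measure M (space M - A) \<le> \<epsilon> \<and>
           (\<forall>\<omega>\<in>A. \<bar>(SUP F\<in>{F::real^'k^'k. onorm (\<lambda>v. F *v v) \<le> 1}.
                        \<bar>Delta_pop P t F - Delta_emp (\<lambda>r. X r \<omega>) n t F\<bar>)
                     / rateA3 P \<sigma> t n\<bar> \<le> B)"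
proof (intro allI impI, fold sup_Delta_diff_def)
  fix \<epsilon> :: real assume "0 < \<epsilon>"
  interpret iid_sample M X P
    by (intro iid_sample.intro iid_sample_axioms.intro assms(1-4))
  obtain \<alpha> \<beta> \<gamma> where "0 \<le> \<alpha>" "0 \<le> \<beta>" "0 \<le> \<gamma>" and event: "\<forall>n\<ge>1. \<exists>A\<in>sets M.
      measure M (space M - A) \<le> \<epsilon> \<and> (\<forall>\<omega>\<in>A. 0 \<le> sup_Delta_diff P t (\<lambda>r. X r \<omega>) n
        \<and> sup_Delta_diff P t (\<lambda>r. X r \<omega>) n \<le> sqrt_log_rate (real CARD('k)) \<alpha> \<beta> \<gamma> n)"
    using sup_Delta_diff_bound_with_prob[OF assms(5,7) \<open>0 < \<epsilon>\<close>, of t] by blast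
  obtain B where B: "\<forall>n\<ge>1. \<forall>y. 0 \<le> y \<and> y \<le> sqrt_log_rate (real CARD('k)) \<alpha> \<beta> \<gamma> n
      \<longrightarrow> \<bar>y / rateA3 P \<sigma> t n\<bar> \<le> B"
    using rateA3_dominates[OF \<open>0 \<le> \<alpha>\<close> \<open>0 \<le> \<beta>\<close> \<open>0 \<le> \<gamma>\<close>] by blast
  show "\<exists>B. \<forall>n\<ge>1. \<exists>A\<in>sets M. measure M (space M - A) \<le> \<epsilon> \<and>
      (\<forall>\<omega>\<in>A. \<bar>sup_Delta_diff P t (\<lambda>r. X r \<omega>) n / rateA3 P \<sigma> t n\<bar> \<le> B)"
  proof (intro exI[of _ B] allI impI)
    fix n :: nat assume "1 \<le> n"
    with event B show "\<exists>A\<in>sets M. measure M (space M - A) \<le> \<epsilon> \<and>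
        (\<forall>\<omega>\<in>A. \<bar>sup_Delta_diff P t (\<lambda>r. X r \<omega>) n / rateA3 P \<sigma> t n\<bar> \<le> B)"
      by (meson order_trans)
  qed
qed

end
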